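(* Suppose $G$ consists of a single strongly connected component and at least one vertex of $G$ has out-degree greater than one. Then the flow $\psi$ on $\Delta$ is chaotic.
   Context: $G$ is a finite directed graph (loops allowed) with vertex set $V$. $\Omega$ is the set of bi-infinite paths in $G$, i.e. sequences $(x_i)_{i\in\mathbb Z}\in V^{\mathbb Z}$ such that for every $i$ there is an edge from $x_i$ to $x_{i+1}$. Fix $h>0$. $\bar\Delta$ is the set of functions $x:\mathbb R\to V$ that are constant on each interval $[nh,(n+1)h)$, $n\in\mathbb Z$, and satisfy $(x(ih))_{i\in\mathbb Z}\in\Omega$. $\Delta=\{x(\cdot+t): x\in\bar\Delta,\ t\in\mathbb R\}$, with metric $d(x,y)=\sum_{i\in\mathbb Z}4^{-|i|}\frac1h\int_{ih}^{(i+1)h}\delta(x,y,t)\,dt$, where $\delta(x,y,t)=1$ if $x(t)\ne y(t)$ and $0$ otherwise. The flow $\psi:\mathbb R\times\Delta\to\Delta$ is $\psi(t,x)=x(\cdot+t)$. "$G$ consists of a single strongly connected component" means that for all $u,v\in V$ (including $u=v$) there is a directed path of positive length from $u$ to $v$. A flow on a metric space $X$ is chaotic if (i) it has sensitive dependence on initial conditions (there is $\delta>0$ such that for every $x\in X$ and every neighborhood $B$ of $x$ there are $y\in B$, $t>0$ with $d(\Phi_t(x),\Phi_t(y))>\delta$), (ii) its periodic points are dense in $X$, and (iii) it is topologically transitive (there is $x\in X$ with $\omega(x)=X$, where $\omega(x)$ is the set of limits of $\Phi_{t_k}(x)$ along sequences $t_k\to+\infty$). *)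

theory Defs
  imports "HOL-Analysis.Analysis"
begin

definition strongly_connected :: "('v \<Rightarrow> 'v \<Rightarrow> bool) \<Rightarrow> bool" where
  "strongly_connected E \<longleftrightarrow> (\<forall>u v. (u, v) \<in> {(a, b). E a b}\<^sup>+)"

definition out_degree :: "('v \<Rightarrow> 'v \<Rightarrow> bool) \<Rightarrow> 'v \<Rightarrow> nat" where
  "out_degree E v = card {w. E v w}"

definition Omega :: "('v \<Rightarrow> 'v \<Rightarrow> bool) \<Rightarrow> (int \<Rightarrow> 'v) set" where
  "Omega E = {s. \<forall>i. E (s i) (s (i + 1))}"

definition Delta_bar :: "('v \<Rightarrow> 'v \<Rightarrow> bool) \<Rightarrow> real \<Rightarrow> (real \<Rightarrow> 'v) set" where
  "Delta_bar E h = {x. (\<forall>n::int. \<forall>t. real_of_int n * h \<le> t \<and> t < real_of_int (n + 1) * h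
                        \<longrightarrow> x t = x (real_of_int n * h))
                   \<and> (\<lambda>i::int. x (real_of_int i * h)) \<in> Omega E}"

definition Delta :: "('v \<Rightarrow> 'v \<Rightarrow> bool) \<Rightarrow> real \<Rightarrow> (real \<Rightarrow> 'v) set" where
  "Delta E h = {(\<lambda>s. x (s + t)) | x t. x \<in> Delta_bar E h}"

definition delta_ind :: "(real \<Rightarrow> 'v) \<Rightarrow> (real \<Rightarrow> 'v) \<Rightarrow> real \<Rightarrow> real" where
  "delta_ind x y t = (if x t \<noteq> y t then 1 else 0)"

definition dist_Delta :: "real \<Rightarrow> (real \<Rightarrow> 'v) \<Rightarrow> (real \<Rightarrow> 'v) \<Rightarrow> real" where
  "dist_Delta h x y = (\<Sum>\<^sub>\<infinity>i\<in>(UNIV::int set).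
      (1/4) ^ nat \<bar>i\<bar> * ((1 / h) * integral {real_of_int i * h .. real_of_int (i + 1) * h} (delta_ind x y)))"

definition psi :: "real \<Rightarrow> (real \<Rightarrow> 'v) \<Rightarrow> (real \<Rightarrow> 'v)" where
  "psi t x = (\<lambda>s. x (s + t))"

definition sensitive_dependence ::
  "'a set \<Rightarrow> ('a \<Rightarrow> 'a \<Rightarrow> real) \<Rightarrow> (real \<Rightarrow> 'a \<Rightarrow> 'a) \<Rightarrow> bool" where
  "sensitive_dependence X d Phi \<longleftrightarrow>
     (\<exists>\<delta>>0. \<forall>x\<in>X. \<forall>B. (\<exists>e>0. {z\<in>X. d x z < e} \<subseteq> B) \<longrightarrow>
        (\<exists>y\<in>B \<inter> X. \<exists>t>0. d (Phi t x) (Phi t y) > \<delta>))"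

definition periodic_point :: "'a set \<Rightarrow> (real \<Rightarrow> 'a \<Rightarrow> 'a) \<Rightarrow> 'a \<Rightarrow> bool" where
  "periodic_point X Phi x \<longleftrightarrow> x \<in> X \<and> (\<exists>T>0. Phi T x = x)"

definition periodic_dense ::
  "'a set \<Rightarrow> ('a \<Rightarrow> 'a \<Rightarrow> real) \<Rightarrow> (real \<Rightarrow> 'a \<Rightarrow> 'a) \<Rightarrow> bool" where
  "periodic_dense X d Phi \<longleftrightarrow>
     (\<forall>x\<in>X. \<forall>e>0. \<exists>p. periodic_point X Phi p \<and> d x p < e)"

definition omega_limit ::
  "'a set \<Rightarrow> ('a \<Rightarrow> 'a \<Rightarrow> real) \<Rightarrow> (real \<Rightarrow> 'a \<Rightarrow> 'a) \<Rightarrow> 'a \<Rightarrow> 'a set" where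
  "omega_limit X d Phi x = {y\<in>X. \<exists>tk::nat \<Rightarrow> real. filterlim tk at_top sequentially \<and>
       (\<lambda>k. d (Phi (tk k) x) y) \<longlonglongrightarrow> 0}"

definition topologically_transitive ::
  "'a set \<Rightarrow> ('a \<Rightarrow> 'a \<Rightarrow> real) \<Rightarrow> (real \<Rightarrow> 'a \<Rightarrow> 'a) \<Rightarrow> bool" where
  "topologically_transitive X d Phi \<longleftrightarrow> (\<exists>x\<in>X. omega_limit X d Phi x = X)"

definition chaotic_flow ::
  "'a set \<Rightarrow> ('a \<Rightarrow> 'a \<Rightarrow> real) \<Rightarrow> (real \<Rightarrow> 'a \<Rightarrow> 'a) \<Rightarrow> bool" where
  "chaotic_flow X d Phi \<longleftrightarrow>
     sensitive_dependence X d Phi \<and> periodic_dense X d Phi \<and> topologically_transitive X d Phi"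

end

theory Submission
  imports Defs
begin

text \<open>Points of \<open>Delta\<close> are the suspensions \<open>s \<mapsto> \<sigma> \<lfloor>(s + t) / h\<rfloor>\<close> of bi-infinite paths
  \<open>\<sigma>\<close>, and \<open>psi\<close> shifts the time \<open>t\<close>. The metric only sees the blocks near time 0: if the
  paths agree on the blocks \<open>-N, \<dots>, N + 1\<close> the points are within \<open>C 2\<^sup>-\<^sup>N\<close>, and if they
  differ on block 0 they are at distance at least 1. Hence all three properties come down to
  splicing finite paths, which strong connectivity allows through connecting bridges. Closing a
  long central segment of \<open>\<sigma>\<close> into a cycle gives a nearby periodic point. Continuing the segment
  to a vertex of out-degree at least two and leaving it along an edge other than the one taken by
  \<open>\<sigma>\<close> gives a nearby point that is separated at a later block. Finally, a single path that
  contains every finite path (bridged concatenation of an enumeration of all of them) has a dense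
  forward orbit.\<close>

section \<open>The metric on suspensions\<close>

lemma summable_on_power_abs_int:
  fixes r :: real
  assumes "0 \<le> r" "r < 1"
  shows "(\<lambda>i::int. r ^ nat \<bar>i\<bar>) summable_on UNIV"
proof -
  let ?g = "\<lambda>i::int. r ^ nat \<bar>i\<bar>"
  have split: "(UNIV::int set) = range int \<union> range (\<lambda>n. - int n - 1)"
  proof -
    have "i \<in> range int \<union> range (\<lambda>n. - int n - 1)" for i :: int
    proof (cases "i \<ge> 0")
      case True then show ?thesis by (metis UnI1 nonneg_int_cases rangeI)
    next
      case False then have "i = - int (nat (- i - 1)) - 1" by simp
      then show ?thesis by blast
    qed
    then show ?thesis by blast
  qed
  have geometric: "summable (\<lambda>n. r ^ n)" "summable (\<lambda>n. r * r ^ n)"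
    using assms by (simp_all add: summable_geometric summable_mult)
  have "?g summable_on range int"
    by (subst summable_on_reindex)
      (use assms geometric in \<open>auto simp: o_def intro: summable_nonneg_imp_summable_on\<close>)
  moreover have "?g summable_on range (\<lambda>n. - int n - 1)"
  proof (subst summable_on_reindex)
    show "inj_on (\<lambda>n::nat. - int n - 1) UNIV" by (simp add: inj_on_def)
    have "?g \<circ> (\<lambda>n::nat. - int n - 1) = (\<lambda>n. r * r ^ n)"
      by (rule ext) (simp add: nat_add_distrib)
    then show "(?g \<circ> (\<lambda>n::nat. - int n - 1)) summable_on UNIV"
      using assms geometric by (auto intro: summable_nonneg_imp_summable_on)
  qed
  ultimately show ?thesis
    unfolding split by (intro summable_on_Un_disjoint) auto
qed

lemma integral_nonneg_le_length:
  fixes f :: "real \<Rightarrow> real"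
  assumes "a \<le> b" and "\<And>t. 0 \<le> f t" and "\<And>t. f t \<le> 1"
  shows "0 \<le> integral {a..b} f \<and> integral {a..b} f \<le> b - a"
proof (cases "f integrable_on {a..b}")
  case True
  have "integral {a..b} f \<le> integral {a..b} (\<lambda>_. 1)"
    using True assms by (intro integral_le) auto
  then show ?thesis using True assms by (auto intro: integral_nonneg)
next
  case False then show ?thesis using assms by (simp add: not_integrable_integral)
qed

definition dist_Delta_term :: "real \<Rightarrow> (real \<Rightarrow> 'v) \<Rightarrow> (real \<Rightarrow> 'v) \<Rightarrow> int \<Rightarrow> real" where
  "dist_Delta_term h x y i =
     (1/4) ^ nat \<bar>i\<bar> * ((1 / h) * integral {real_of_int i * h .. real_of_int (i + 1) * h} (delta_ind x y))"

lemma dist_Delta_eq_infsum: "dist_Delta h x y = infsum (dist_Delta_term h x y) UNIV"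
  unfolding dist_Delta_def dist_Delta_term_def by simp

lemma dist_Delta_term_bounds:
  assumes "h > 0"
  shows "0 \<le> dist_Delta_term h x y i \<and> dist_Delta_term h x y i \<le> (1/4) ^ nat \<bar>i\<bar>"
proof -
  let ?I = "integral {real_of_int i * h .. real_of_int (i + 1) * h} (delta_ind x y)"
  have "real_of_int i * h \<le> real_of_int (i + 1) * h" using assms by (simp add: distrib_right)
  from integral_nonneg_le_length[OF this, of "delta_ind x y"]
  have "0 \<le> ?I \<and> ?I \<le> h" by (auto simp: delta_ind_def distrib_right)
  then have "0 \<le> (1/h) * ?I" "(1/h) * ?I \<le> 1"
    using assms by (auto simp: field_simps)
  moreover have "0 \<le> (1/4::real) ^ nat \<bar>i\<bar>" by simp
  ultimately show ?thesis
    unfolding dist_Delta_term_def by (metis mult_nonneg_nonneg mult_left_le)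
qed

lemma dist_Delta_term_summable: "h > 0 \<Longrightarrow> dist_Delta_term h x y summable_on UNIV"
  by (rule summable_on_comparison_test[OF summable_on_power_abs_int[of "1/4"]])
    (use dist_Delta_term_bounds in auto)

lemma dist_Delta_nonneg: "h > 0 \<Longrightarrow> 0 \<le> dist_Delta h x y"
  unfolding dist_Delta_eq_infsum by (rule infsum_nonneg) (use dist_Delta_term_bounds in auto)

definition half_power_sum :: real where
  "half_power_sum = infsum (\<lambda>i::int. (1/2) ^ nat \<bar>i\<bar>) UNIV"

lemma dist_Delta_le_if_agree:
  assumes h: "h > 0"
    and agree: "\<And>s. - real N * h \<le> s \<Longrightarrow> s \<le> (real N + 1) * h \<Longrightarrow> x s = y s"
  shows "dist_Delta h x y \<le> half_power_sum * (1/2) ^ N"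
proof -
  have bound: "dist_Delta_term h x y i \<le> (1/2) ^ N * (1/2) ^ nat \<bar>i\<bar>" for i
  proof (cases "\<bar>i\<bar> \<le> int N")
    case True
    have "integral {real_of_int i * h .. real_of_int (i + 1) * h} (delta_ind x y)
        = integral {real_of_int i * h .. real_of_int (i + 1) * h} (\<lambda>_. 0)"
    proof (rule integral_cong)
      fix t assume t: "t \<in> {real_of_int i * h .. real_of_int (i + 1) * h}"
      have "- real N * h \<le> real_of_int i * h" "real_of_int (i + 1) * h \<le> (real N + 1) * h"
        using True h by (intro mult_right_mono; simp)+
      then show "delta_ind x y t = 0" using t agree unfolding delta_ind_def by auto
    qed
    then show ?thesis unfolding dist_Delta_term_def by simp
  next
    case False
    have "dist_Delta_term h x y i \<le> (1/2) ^ nat \<bar>i\<bar> * (1/2) ^ nat \<bar>i\<bar>"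
      using dist_Delta_term_bounds[OF h, of x y i] by (simp add: power_mult_distrib[symmetric])
    also have "\<dots> \<le> (1/2) ^ N * (1/2) ^ nat \<bar>i\<bar>"
      using False by (intro mult_right_mono power_decreasing) auto
    finally show ?thesis .
  qed
  have "dist_Delta h x y \<le> infsum (\<lambda>i. (1/2) ^ N * (1/2) ^ nat \<bar>i\<bar>) UNIV"
    unfolding dist_Delta_eq_infsum using summable_on_power_abs_int[of "1/2"]
    by (intro infsum_mono dist_Delta_term_summable h summable_on_cmult_right bound) auto
  also have "\<dots> = half_power_sum * (1/2) ^ N"
    unfolding half_power_sum_def using summable_on_power_abs_int[of "1/2"]
    by (subst infsum_cmult_right) auto
  finally show ?thesis .
qed

lemma one_le_dist_Delta_if_differ:
  assumes h: "h > 0" and differ: "\<And>s. 0 \<le> s \<Longrightarrow> s < h \<Longrightarrow> x s \<noteq> y s"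
  shows "1 \<le> dist_Delta h x y"
proof -
  have "integral {0..h} (delta_ind x y) = integral {0..h} (\<lambda>_. 1)"
    by (rule integral_spike[of "{h}"]) (auto simp: delta_ind_def differ)
  then have "dist_Delta_term h x y 0 = 1" unfolding dist_Delta_term_def using h by simp
  moreover have "infsum (dist_Delta_term h x y) {0} \<le> infsum (dist_Delta_term h x y) UNIV"
    by (intro infsum_mono_neutral dist_Delta_term_summable h) (use dist_Delta_term_bounds[OF h] in auto)
  ultimately show ?thesis unfolding dist_Delta_eq_infsum by simp
qed

section \<open>Bi-infinite paths as points of the flow\<close>

definition suspension :: "real \<Rightarrow> (int \<Rightarrow> 'v) \<Rightarrow> real \<Rightarrow> real \<Rightarrow> 'v" where
  "suspension h \<sigma> t = (\<lambda>s. \<sigma> \<lfloor>(s + t) / h\<rfloor>)"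

lemma floor_add_int_mult_divide:
  fixes h :: real
  assumes "h > 0"
  shows "\<lfloor>(s + real_of_int k * h) / h\<rfloor> = \<lfloor>s / h\<rfloor> + k"
proof -
  have "(s + real_of_int k * h) / h = s / h + real_of_int k" using assms by (simp add: field_simps)
  then show ?thesis by simp
qed

lemma psi_suspension: "psi r (suspension h \<sigma> t) = suspension h \<sigma> (t + r)"
  unfolding psi_def suspension_def by (simp add: add_ac)

lemma suspension_shift:
  assumes "h > 0"
  shows "suspension h \<sigma> (t + real_of_int k * h) = suspension h (\<lambda>i. \<sigma> (i + k)) t"
  unfolding suspension_def
  using floor_add_int_mult_divide[OF assms, of "_ + t" k] by (simp add: add.assoc)

lemma suspension_in_Delta:
  assumes "h > 0" and "\<sigma> \<in> Omega E"
  shows "suspension h \<sigma> t \<in> Delta E h"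
proof -
  let ?x = "\<lambda>r. \<sigma> \<lfloor>r / h\<rfloor>"
  have "?x \<in> Delta_bar E h"
    unfolding Delta_bar_def
  proof (intro CollectI conjI allI impI)
    fix n :: int and t assume "real_of_int n * h \<le> t \<and> t < real_of_int (n + 1) * h"
    then have "\<lfloor>t / h\<rfloor> = n" using assms by (simp add: floor_eq_iff field_simps)
    then show "?x t = ?x (real_of_int n * h)" using assms by simp
  qed (use assms in simp)
  then show ?thesis
    unfolding Delta_def suspension_def by (intro CollectI exI[of _ ?x] exI[of _ t]) simp
qed

lemma Delta_imp_suspension:
  assumes "h > 0" and "x \<in> Delta E h"
  obtains \<sigma> t where "\<sigma> \<in> Omega E" and "x = suspension h \<sigma> t"
proof -
  obtain y t where x: "x = (\<lambda>s. y (s + t))" and y: "y \<in> Delta_bar E h"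
    using assms unfolding Delta_def by blast
  let ?\<sigma> = "\<lambda>i::int. y (real_of_int i * h)"
  have "y r = ?\<sigma> \<lfloor>r / h\<rfloor>" for r
  proof -
    have "real_of_int \<lfloor>r / h\<rfloor> * h \<le> r" "r < real_of_int (\<lfloor>r / h\<rfloor> + 1) * h"
      using floor_divide_lower[OF assms(1)] floor_divide_upper[OF assms(1), of r] by simp_all
    then show ?thesis using y unfolding Delta_bar_def by blast
  qed
  then have "x = suspension h ?\<sigma> t" unfolding x suspension_def by simp
  moreover have "?\<sigma> \<in> Omega E" using y unfolding Delta_bar_def by blast
  ultimately show thesis using that by blast
qed

lemma dist_suspension_le:
  assumes h: "h > 0"
    and agree: "\<And>i. \<lfloor>t / h\<rfloor> - int N \<le> i \<Longrightarrow> i \<le> \<lfloor>t / h\<rfloor> + int N + 1 \<Longrightarrow> \<sigma> i = \<sigma>' i"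
  shows "dist_Delta h (suspension h \<sigma> t) (suspension h \<sigma>' t) \<le> half_power_sum * (1/2) ^ N"
proof (rule dist_Delta_le_if_agree[OF h])
  fix s assume "- real N * h \<le> s" "s \<le> (real N + 1) * h"
  then have "- real N \<le> s / h" "s / h \<le> real N + 1"
    using h by (simp_all add: field_simps)
  then have "- real N + t / h \<le> (s + t) / h" "(s + t) / h \<le> real N + 1 + t / h"
    by (simp_all add: add_divide_distrib)
  then have "\<lfloor>- real N + t / h\<rfloor> \<le> \<lfloor>(s + t) / h\<rfloor>" "\<lfloor>(s + t) / h\<rfloor> \<le> \<lfloor>real N + 1 + t / h\<rfloor>"
    by (simp_all only: floor_mono)
  moreover have "\<lfloor>- real N + t / h\<rfloor> = \<lfloor>t / h\<rfloor> - int N"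
    using floor_add_int[of "t / h" "- int N"] by (simp add: add.commute)
  moreover have "\<lfloor>real N + 1 + t / h\<rfloor> = \<lfloor>t / h\<rfloor> + int N + 1"
    using floor_add_int[of "t / h" "int N + 1"] by (simp add: add_ac)
  ultimately show "suspension h \<sigma> t s = suspension h \<sigma>' t s"
    unfolding suspension_def using agree by simp
qed

lemma one_le_dist_suspension:
  assumes h: "h > 0" and "\<sigma> k \<noteq> \<sigma>' k"
  shows "1 \<le> dist_Delta h (suspension h \<sigma> (real_of_int k * h)) (suspension h \<sigma>' (real_of_int k * h))"
proof (rule one_le_dist_Delta_if_differ[OF h])
  fix s assume "0 \<le> s" "s < h"
  then have "\<lfloor>s / h\<rfloor> = 0" using h by (simp add: floor_eq_iff)
  then have "\<lfloor>(s + real_of_int k * h) / h\<rfloor> = k" using floor_add_int_mult_divide[OF h] by simp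
  then show "suspension h \<sigma> (real_of_int k * h) s \<noteq> suspension h \<sigma>' (real_of_int k * h) s"
    unfolding suspension_def using assms(2) by simp
qed

lemma Delta_cylinder_neighbourhood:
  assumes h: "h > 0" and x: "x \<in> Delta E h" and e: "e > 0"
  obtains \<sigma> t a n where "\<sigma> \<in> Omega E" "x = suspension h \<sigma> t" "t < real_of_int (a + int n) * h" "0 < n"
    "\<And>\<sigma>'. (\<And>i. a \<le> i \<Longrightarrow> i < a + int n \<Longrightarrow> \<sigma>' i = \<sigma> i) \<Longrightarrow> dist_Delta h x (suspension h \<sigma>' t) < e"
proof -
  obtain \<sigma> t where \<sigma>: "\<sigma> \<in> Omega E" and x: "x = suspension h \<sigma> t"
    using Delta_imp_suspension[OF h x] by blast
  have "(\<lambda>N. half_power_sum * (1/2::real) ^ N) \<longlonglongrightarrow> 0"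
    by (intro tendsto_mult_right_zero LIMSEQ_power_zero) simp
  then have "eventually (\<lambda>N. half_power_sum * (1/2::real) ^ N < e) sequentially"
    using e by (rule order_tendstoD(2))
  then obtain N where N: "half_power_sum * (1/2) ^ N < e"
    by (auto simp: eventually_sequentially)
  define a where "a = \<lfloor>t / h\<rfloor> - int N"
  have "t / h < real_of_int (a + int (2 * N + 2))"
    unfolding a_def by linarith
  then have "t < real_of_int (a + int (2 * N + 2)) * h"
    using h by (simp add: divide_less_eq)
  moreover have "dist_Delta h x (suspension h \<sigma>' t) < e"
    if "\<And>i. a \<le> i \<Longrightarrow> i < a + int (2 * N + 2) \<Longrightarrow> \<sigma>' i = \<sigma> i" for \<sigma>'
    using dist_suspension_le[OF h, of t N \<sigma> \<sigma>'] that N unfolding x a_def by fastforce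
  ultimately show thesis using that[OF \<sigma> x, of a "2 * N + 2"] by simp
qed

section \<open>Splicing paths in a strongly connected graph\<close>

lemma trancl_imp_path:
  assumes "(u, v) \<in> {(a, b). E a b}\<^sup>+"
  shows "\<exists>cs. successively E (u # cs @ [v])"
  using assms
proof (induction rule: trancl_induct)
  case (base y)
  then show ?case by (intro exI[of _ "[]"]) simp
next
  case (step y z)
  then obtain cs where "successively E (u # cs @ [y])" by blast
  then have "successively E ((u # cs @ [y]) @ [z])"
    using step by (subst successively_append_iff) auto
  then show ?case by (intro exI[of _ "cs @ [y]"]) simp
qed

lemma successively_append_via_last:
  assumes "successively E xs" "xs \<noteq> []" "successively E (last xs # ys)"
  shows "successively E (xs @ ys)"
  using assms by (cases ys) (auto simp: successively_append_iff successively_Cons)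

lemma Omega_shift: "\<sigma> \<in> Omega E \<Longrightarrow> (\<lambda>i. \<sigma> (i + k)) \<in> Omega E"
  unfolding Omega_def
proof (intro CollectI allI)
  fix i assume "\<sigma> \<in> {s. \<forall>i. E (s i) (s (i + 1))}"
  then have "E (\<sigma> (i + k)) (\<sigma> (i + k + 1))" by blast
  then show "E (\<sigma> (i + k)) (\<sigma> (i + 1 + k))" by (simp add: add_ac)
qed

definition path_segment :: "(int \<Rightarrow> 'v) \<Rightarrow> int \<Rightarrow> nat \<Rightarrow> 'v list" where
  "path_segment \<sigma> a n = map (\<lambda>j. \<sigma> (a + int j)) [0..<n]"

lemma length_path_segment [simp]: "length (path_segment \<sigma> a n) = n"
  unfolding path_segment_def by simp

lemma path_segment_eq_Nil_iff [simp]: "path_segment \<sigma> a n = [] \<longleftrightarrow> n = 0"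
  unfolding path_segment_def by simp

lemma successively_path_segment: "\<sigma> \<in> Omega E \<Longrightarrow> successively E (path_segment \<sigma> a n)"
  unfolding successively_conv_nth path_segment_def Omega_def by (auto simp: add_ac)

lemma path_segment_append_nth:
  assumes "a \<le> i" "i < a + int n"
  shows "(path_segment \<sigma> a n @ ys) ! nat (i - a) = \<sigma> i"
proof -
  have "nat (i - a) < n" using assms by linarith
  then show ?thesis using assms unfolding path_segment_def by (simp add: nth_append)
qed

definition periodic_path :: "'v list \<Rightarrow> int \<Rightarrow> 'v" where
  "periodic_path xs i = xs ! nat (i mod int (length xs))"

lemma periodic_path_in_Omega:
  assumes ne: "xs \<noteq> []" and closed: "successively E (xs @ [hd xs])"
  shows "periodic_path xs \<in> Omega E"
  unfolding Omega_def periodic_path_def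
proof (intro CollectI allI)
  fix i :: int
  let ?L = "int (length xs)" and ?r = "i mod int (length xs)"
  have r: "0 \<le> ?r" "?r < ?L" using ne by simp_all
  have next_mod: "(i + 1) mod ?L = (?r + 1) mod ?L" by (simp add: mod_add_left_eq)
  have step: "E (xs ! nat ?r) ((xs @ [hd xs]) ! Suc (nat ?r))"
    using successively_nth[OF closed, of "nat ?r"] r by (simp add: nth_append nat_less_iff)
  show "E (xs ! nat ?r) (xs ! nat ((i + 1) mod ?L))"
  proof (cases "?r + 1 < ?L")
    case True
    then have "nat ((i + 1) mod ?L) = Suc (nat ?r)" "Suc (nat ?r) < length xs"
      using next_mod r by (simp_all add: Suc_nat_eq_nat_zadd1 nat_less_iff)
    with step show ?thesis by (simp add: nth_append)
  next
    case False
    then have "?r + 1 = ?L" using r by simp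
    then have "(i + 1) mod ?L = 0" "Suc (nat ?r) = length xs" using next_mod r by simp_all
    with step ne show ?thesis by (simp add: hd_conv_nth)
  qed
qed

lemma out_degree_gt_1_imp_two_successors:
  assumes "out_degree E v > 1"
  obtains w\<^sub>1 w\<^sub>2 where "E v w\<^sub>1" "E v w\<^sub>2" "w\<^sub>1 \<noteq> w\<^sub>2"
proof -
  have "finite {w. E v w}" "\<not> card {w. E v w} \<le> Suc 0"
    using assms unfolding out_degree_def by (auto intro: card_ge_0_finite)
  then show thesis using that card_le_Suc0_iff_eq by blast
qed

locale strongly_connected_graph =
  fixes E :: "'v::countable \<Rightarrow> 'v \<Rightarrow> bool"
  assumes strongly_connected: "strongly_connected E"
begin

lemma trancl_edges: "(u, v) \<in> {(a, b). E a b}\<^sup>+"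
  using strongly_connected unfolding strongly_connected_def by blast

definition bridge :: "'v \<Rightarrow> 'v \<Rightarrow> 'v list" where
  "bridge u v = (SOME cs. successively E (u # cs @ [v]))"

lemma successively_bridge: "successively E (u # bridge u v @ [v])"
  unfolding bridge_def by (rule someI_ex[OF trancl_imp_path[OF trancl_edges]])

definition some_succ :: "'v \<Rightarrow> 'v" where "some_succ u = (SOME w. E u w)"
definition some_pred :: "'v \<Rightarrow> 'v" where "some_pred u = (SOME w. E w u)"

lemma edge_some_succ: "E u (some_succ u)"
proof -
  obtain w where "E u w" using tranclD[OF trancl_edges[of u u]] by blast
  then show ?thesis unfolding some_succ_def by (rule someI)
qed

lemma edge_some_pred: "E (some_pred u) u"
proof -
  obtain w where "E w u" using tranclD2[OF trancl_edges[of u u]] by blast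
  then show ?thesis unfolding some_pred_def by (rule someI)
qed

definition extend_left :: "(nat \<Rightarrow> 'v) \<Rightarrow> int \<Rightarrow> 'v" where
  "extend_left f i = (if i < 0 then (some_pred ^^ nat (- i)) (f 0) else f (nat i))"

lemma extend_left_in_Omega:
  assumes path: "\<And>n. E (f n) (f (Suc n))"
  shows "extend_left f \<in> Omega E"
  unfolding Omega_def
proof (intro CollectI allI)
  fix i :: int
  consider "i < -1" | "i = -1" | "i \<ge> 0" by linarith
  then show "E (extend_left f i) (extend_left f (i + 1))"
  proof cases
    case 1
    then have "nat (- i) = Suc (nat (- (i + 1)))" by simp
    with 1 show ?thesis unfolding extend_left_def by (simp add: edge_some_pred)
  next
    case 2
    then show ?thesis unfolding extend_left_def by (simp add: edge_some_pred)
  next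
    case 3
    then have "nat (i + 1) = Suc (nat i)" by (simp add: nat_add_distrib)
    with 3 path show ?thesis unfolding extend_left_def by simp
  qed
qed

definition extend_path :: "'v list \<Rightarrow> int \<Rightarrow> 'v" where
  "extend_path xs = extend_left
     (\<lambda>n. if n < length xs then xs ! n else (some_succ ^^ (n - (length xs - 1))) (last xs))"

lemma extend_path_nth: "j < length xs \<Longrightarrow> extend_path xs (int j) = xs ! j"
  unfolding extend_path_def extend_left_def by simp

lemma extend_path_in_Omega:
  assumes ne: "xs \<noteq> []" and path: "successively E xs"
  shows "extend_path xs \<in> Omega E"
  unfolding extend_path_def
proof (rule extend_left_in_Omega)
  fix n
  consider "Suc n < length xs" | "Suc n = length xs" | "Suc n > length xs" by linarith
  then show "E (if n < length xs then xs ! n else (some_succ ^^ (n - (length xs - 1))) (last xs))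
              (if Suc n < length xs then xs ! Suc n
               else (some_succ ^^ (Suc n - (length xs - 1))) (last xs))"
  proof cases
    case 1
    then show ?thesis using successively_nth[OF path 1] by simp
  next
    case 2
    then have "xs ! n = last xs" by (metis diff_Suc_1 last_conv_nth list.size(3) nat.distinct(1))
    with 2 show ?thesis by (simp add: edge_some_succ)
  next
    case 3
    then have "Suc n - (length xs - 1) = Suc (n - (length xs - 1))" by simp
    with 3 show ?thesis by (simp add: edge_some_succ)
  qed
qed

lemma exists_path_branching_off:
  assumes \<sigma>: "\<sigma> \<in> Omega E" and "0 < n"
    and branch: "E v w\<^sub>1" "E v w\<^sub>2" "w\<^sub>1 \<noteq> w\<^sub>2"
  obtains \<sigma>' k where "\<sigma>' \<in> Omega E" "a + int n \<le> k" "\<sigma>' k \<noteq> \<sigma> k"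
    "\<And>i. a \<le> i \<Longrightarrow> i < a + int n \<Longrightarrow> \<sigma>' i = \<sigma> i"
proof -
  define xs where "xs = path_segment \<sigma> a n"
  define cs where "cs = bridge (last xs) v"
  define k where "k = a + int (length xs + length cs + 1)"
  define w where "w = (if \<sigma> k = w\<^sub>1 then w\<^sub>2 else w\<^sub>1)"
  have w: "E v w" "w \<noteq> \<sigma> k" using branch unfolding w_def by auto
  have xs: "xs \<noteq> []" "successively E xs"
    unfolding xs_def using \<open>0 < n\<close> successively_path_segment[OF \<sigma>] by auto
  have "successively E (xs @ cs @ [v, w])"
  proof (rule successively_append_via_last[OF xs(2,1)])
    have "successively E ((last xs # cs @ [v]) @ [w])"
      using successively_bridge[of "last xs" v] w(1) unfolding cs_def
      by (subst successively_append_iff) auto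
    then show "successively E (last xs # cs @ [v, w])" by simp
  qed
  then have path: "extend_path (xs @ cs @ [v, w]) \<in> Omega E"
    by (rule extend_path_in_Omega[rotated]) simp
  define \<sigma>' where "\<sigma>' = (\<lambda>i. extend_path (xs @ cs @ [v, w]) (i - a))"
  show thesis
  proof (rule that)
    show "\<sigma>' \<in> Omega E" unfolding \<sigma>'_def using Omega_shift[OF path, of "- a"] by simp
    show "a + int n \<le> k" unfolding k_def xs_def by simp
    have "\<sigma>' k = (xs @ cs @ [v, w]) ! (length xs + length cs + 1)"
      unfolding \<sigma>'_def k_def using extend_path_nth[of "length xs + length cs + 1"] by simp
    then show "\<sigma>' k \<noteq> \<sigma> k" using w(2) by (simp add: nth_append)
    fix i assume i: "a \<le> i" "i < a + int n"
    then have "\<sigma>' i = (xs @ cs @ [v, w]) ! nat (i - a)"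
      unfolding \<sigma>'_def xs_def by (subst extend_path_nth[symmetric]) simp_all
    then show "\<sigma>' i = \<sigma> i" using path_segment_append_nth[OF i] unfolding xs_def by simp
  qed
qed

lemma exists_periodic_path_agreeing:
  assumes \<sigma>: "\<sigma> \<in> Omega E" and "0 < n"
  obtains \<sigma>' L where "\<sigma>' \<in> Omega E" "0 < L" "\<And>i. \<sigma>' (i + int L) = \<sigma>' i"
    "\<And>i. a \<le> i \<Longrightarrow> i < a + int n \<Longrightarrow> \<sigma>' i = \<sigma> i"
proof -
  define xs where "xs = path_segment \<sigma> a n"
  define cyc where "cyc = xs @ bridge (last xs) (hd xs)"
  define L where "L = length cyc"
  have xs: "xs \<noteq> []" "successively E xs"
    unfolding xs_def using \<open>0 < n\<close> successively_path_segment[OF \<sigma>] by auto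
  have "successively E (cyc @ [hd cyc])"
    unfolding cyc_def using successively_append_via_last[OF xs(2,1) successively_bridge] xs(1) by simp
  then have path: "periodic_path cyc \<in> Omega E"
    by (rule periodic_path_in_Omega[rotated]) (simp add: cyc_def xs(1))
  have "n \<le> L" unfolding L_def cyc_def xs_def by simp
  define \<sigma>' where "\<sigma>' = (\<lambda>i. periodic_path cyc (i - a))"
  show thesis
  proof (rule that)
    show "\<sigma>' \<in> Omega E" unfolding \<sigma>'_def using Omega_shift[OF path, of "- a"] by simp
    show "0 < L" using \<open>0 < n\<close> \<open>n \<le> L\<close> by simp
    show "\<sigma>' (i + int L) = \<sigma>' i" for i
      unfolding \<sigma>'_def periodic_path_def L_def
      using mod_add_self2[of "i - a" "int (length cyc)"] by (simp add: algebra_simps)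
    fix i assume i: "a \<le> i" "i < a + int n"
    then have "(i - a) mod int L = i - a" using \<open>n \<le> L\<close> by simp
    then have "\<sigma>' i = cyc ! nat (i - a)" unfolding \<sigma>'_def periodic_path_def L_def by simp
    then show "\<sigma>' i = \<sigma> i" using path_segment_append_nth[OF i] unfolding cyc_def xs_def by simp
  qed
qed

definition path_enum :: "nat \<Rightarrow> 'v list" where
  "path_enum k = (let w = from_nat k in if w \<noteq> [] \<and> successively E w then w else [undefined])"

lemma path_enum_is_path: "path_enum k \<noteq> [] \<and> successively E (path_enum k)"
  unfolding path_enum_def Let_def by auto

lemma path_enum_to_nat: "w \<noteq> [] \<Longrightarrow> successively E w \<Longrightarrow> path_enum (to_nat w) = w"
  unfolding path_enum_def Let_def by simp

fun path_concat :: "nat \<Rightarrow> 'v list" where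
  "path_concat 0 = [undefined]"
| "path_concat (Suc n) =
     path_concat n @ bridge (last (path_concat n)) (hd (path_enum n)) @ path_enum n"

lemma path_concat_ne: "path_concat n \<noteq> []"
  by (induction n) auto

lemma successively_path_concat: "successively E (path_concat n)"
proof (induction n)
  case (Suc n)
  let ?u = "last (path_concat n)" and ?w = "path_enum n"
  have "successively E ((?u # bridge ?u (hd ?w) @ [hd ?w]) @ tl ?w)"
    using path_enum_is_path[of n]
    by (intro successively_append_via_last[OF successively_bridge]) simp_all
  then have "successively E (?u # bridge ?u (hd ?w) @ ?w)" using path_enum_is_path[of n] by simp
  then show ?case using successively_append_via_last[OF Suc.IH path_concat_ne] by simp
qed simp

lemma length_path_concat: "n < length (path_concat n)"
proof (induction n)
  case (Suc n)
  have "0 < length (path_enum n)" using path_enum_is_path[of n] by simp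
  with Suc show ?case by (simp del: length_greater_0_conv)
qed simp

lemma path_concat_prefix: "n \<le> m \<Longrightarrow> \<exists>ys. path_concat m = path_concat n @ ys"
  by (induction m rule: dec_induct) auto

lemma path_concat_nth_mono:
  "n \<le> m \<Longrightarrow> i < length (path_concat n) \<Longrightarrow> path_concat m ! i = path_concat n ! i"
  by (auto simp: nth_append dest!: path_concat_prefix)

definition universal_path :: "int \<Rightarrow> 'v" where
  "universal_path = extend_left (\<lambda>i. path_concat i ! i)"

lemma universal_path_nth: "i < length (path_concat n) \<Longrightarrow> universal_path (int i) = path_concat n ! i"
  unfolding universal_path_def extend_left_def
  using path_concat_nth_mono[of i n i] path_concat_nth_mono[of n i i] length_path_concat[of i]
  by (cases "i \<le> n") auto

lemma universal_path_in_Omega: "universal_path \<in> Omega E"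
  unfolding universal_path_def
proof (rule extend_left_in_Omega)
  fix i
  have "path_concat i ! i = path_concat (Suc i) ! i"
    using path_concat_nth_mono[of i "Suc i" i] length_path_concat[of i] by simp
  moreover have "E (path_concat (Suc i) ! i) (path_concat (Suc i) ! Suc i)"
    by (rule successively_nth[OF successively_path_concat length_path_concat])
  ultimately show "E (path_concat i ! i) (path_concat (Suc i) ! Suc i)" by simp
qed

lemma universal_path_contains_segment:
  assumes "\<sigma> \<in> Omega E"
  shows "\<exists>p::nat. \<forall>j<n. universal_path (int p + int j) = \<sigma> (a + int j)"
proof (cases "n = 0")
  case False
  define w where "w = path_segment \<sigma> a n"
  define k where "k = to_nat w"
  have w: "w \<noteq> []" "successively E w" "path_enum k = w"
    using False successively_path_segment[OF assms] path_enum_to_nat unfolding w_def k_def by auto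
  define p where "p = length (path_concat k) + length (bridge (last (path_concat k)) (hd w))"
  have "universal_path (int p + int j) = \<sigma> (a + int j)" if "j < n" for j
  proof -
    have "universal_path (int (p + j)) = path_concat (Suc k) ! (p + j)"
      using that w by (intro universal_path_nth) (simp add: p_def w_def)
    also have "\<dots> = w ! j" using w by (simp add: p_def nth_append)
    finally show ?thesis using that unfolding w_def path_segment_def by simp
  qed
  then show ?thesis by blast
qed simp

section \<open>Chaos\<close>

lemma sensitive_dependence_Delta:
  assumes h: "h > 0" and branch: "E v w\<^sub>1" "E v w\<^sub>2" "w\<^sub>1 \<noteq> w\<^sub>2"
  shows "sensitive_dependence (Delta E h) (dist_Delta h) psi"
  unfolding sensitive_dependence_def
proof (intro exI[of _ "1/2"] conjI ballI allI impI)
  fix x B assume x: "x \<in> Delta E h" and "\<exists>e>0. {z \<in> Delta E h. dist_Delta h x z < e} \<subseteq> B"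
  then obtain e where e: "e > 0" "{z \<in> Delta E h. dist_Delta h x z < e} \<subseteq> B" by blast
  obtain \<sigma> t a n where \<sigma>: "\<sigma> \<in> Omega E" and x_eq: "x = suspension h \<sigma> t"
    and t: "t < real_of_int (a + int n) * h" and "0 < n"
    and near: "\<And>\<sigma>'. (\<And>i. a \<le> i \<Longrightarrow> i < a + int n \<Longrightarrow> \<sigma>' i = \<sigma> i) \<Longrightarrow>
      dist_Delta h x (suspension h \<sigma>' t) < e"
    using Delta_cylinder_neighbourhood[OF h x e(1)] by blast
  obtain \<sigma>' k where \<sigma>': "\<sigma>' \<in> Omega E" "a + int n \<le> k" "\<sigma>' k \<noteq> \<sigma> k"
    and agree: "\<And>i. a \<le> i \<Longrightarrow> i < a + int n \<Longrightarrow> \<sigma>' i = \<sigma> i"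
    using exists_path_branching_off[OF \<sigma> \<open>0 < n\<close> branch, where a = a] by blast
  define y where "y = suspension h \<sigma>' t"
  have y: "y \<in> B \<inter> Delta E h"
    using e(2) near[OF agree] suspension_in_Delta[OF h \<sigma>'(1)] unfolding y_def by auto
  define \<tau> where "\<tau> = real_of_int k * h - t"
  have "real_of_int (a + int n) * h \<le> real_of_int k * h" using \<sigma>'(2) h by simp
  then have "\<tau> > 0" using t unfolding \<tau>_def by linarith
  moreover have "1 \<le> dist_Delta h (psi \<tau> x) (psi \<tau> y)"
    using one_le_dist_suspension[OF h, of \<sigma> k \<sigma>'] \<sigma>'(3)
    unfolding x_eq y_def psi_suspension \<tau>_def by simp
  ultimately show "\<exists>y\<in>B \<inter> Delta E h. \<exists>\<tau>>0. 1/2 < dist_Delta h (psi \<tau> x) (psi \<tau> y)"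
    using y by (intro bexI[of _ y] exI[of _ \<tau>]) auto
qed simp

lemma periodic_dense_Delta:
  assumes h: "h > 0"
  shows "periodic_dense (Delta E h) (dist_Delta h) psi"
  unfolding periodic_dense_def
proof (intro ballI allI impI)
  fix x and e :: real assume x: "x \<in> Delta E h" and e: "e > 0"
  obtain \<sigma> t a n where \<sigma>: "\<sigma> \<in> Omega E" and "x = suspension h \<sigma> t"
    and "t < real_of_int (a + int n) * h" and "0 < n"
    and near: "\<And>\<sigma>'. (\<And>i. a \<le> i \<Longrightarrow> i < a + int n \<Longrightarrow> \<sigma>' i = \<sigma> i) \<Longrightarrow>
      dist_Delta h x (suspension h \<sigma>' t) < e"
    using Delta_cylinder_neighbourhood[OF h x e] by blast
  obtain \<sigma>' L where \<sigma>': "\<sigma>' \<in> Omega E" "0 < L" "\<And>i. \<sigma>' (i + int L) = \<sigma>' i"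
    and agree: "\<And>i. a \<le> i \<Longrightarrow> i < a + int n \<Longrightarrow> \<sigma>' i = \<sigma> i"
    using exists_periodic_path_agreeing[OF \<sigma> \<open>0 < n\<close>, where a = a] by blast
  define p where "p = suspension h \<sigma>' t"
  have "psi (real L * h) p = p"
    unfolding p_def psi_suspension using suspension_shift[OF h, of \<sigma>' t "int L"] \<sigma>'(3) by simp
  moreover have "real L * h > 0" using \<sigma>'(2) h by simp
  ultimately have "periodic_point (Delta E h) psi p"
    unfolding periodic_point_def p_def using suspension_in_Delta[OF h \<sigma>'(1)] by blast
  then show "\<exists>p. periodic_point (Delta E h) psi p \<and> dist_Delta h x p < e"
    using near[OF agree] unfolding p_def by blast
qed

text \<open>The copy of the segment of \<open>\<tau>\<close> inside \<open>universal_path\<close> starts at a nonnegative index,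
  which bounds the time from below.\<close>

lemma universal_path_approaches:
  assumes h: "h > 0" and \<tau>: "\<tau> \<in> Omega E"
  obtains t where "s - real_of_int \<lfloor>s / h\<rfloor> * h + h * real k \<le> t"
    "dist_Delta h (psi t (suspension h universal_path 0)) (suspension h \<tau> s) \<le> half_power_sum * (1/2) ^ k"
proof -
  define a where "a = \<lfloor>s / h\<rfloor> - int k"
  obtain p :: nat where p: "\<And>j. j < 2 * k + 2 \<Longrightarrow> universal_path (int p + int j) = \<tau> (a + int j)"
    using universal_path_contains_segment[OF \<tau>] by blast
  define D where "D = int p - a"
  have "psi (s + real_of_int D * h) (suspension h universal_path 0)
      = suspension h (\<lambda>i. universal_path (i + D)) s"
    unfolding psi_suspension using suspension_shift[OF h] by simp
  moreover have "universal_path (i + D) = \<tau> i"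
    if "\<lfloor>s / h\<rfloor> - int k \<le> i" "i \<le> \<lfloor>s / h\<rfloor> + int k + 1" for i
  proof -
    have j: "nat (i - a) < 2 * k + 2" using that unfolding a_def by auto
    have "int p + int (nat (i - a)) = i + D" "a + int (nat (i - a)) = i"
      using that unfolding D_def a_def by auto
    then show ?thesis using p[OF j] by (simp only:)
  qed
  ultimately have "dist_Delta h (psi (s + real_of_int D * h) (suspension h universal_path 0))
      (suspension h \<tau> s) \<le> half_power_sum * (1/2) ^ k"
    using dist_suspension_le[OF h, of s k "\<lambda>i. universal_path (i + D)" \<tau>] by simp
  moreover have "real k - real_of_int \<lfloor>s / h\<rfloor> \<le> real_of_int D" unfolding D_def a_def by simp
  then have "s - real_of_int \<lfloor>s / h\<rfloor> * h + h * real k \<le> s + real_of_int D * h"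
    using h mult_right_mono by (fastforce simp: algebra_simps)
  ultimately show thesis using that by blast
qed

lemma topologically_transitive_Delta:
  assumes h: "h > 0"
  shows "topologically_transitive (Delta E h) (dist_Delta h) psi"
  unfolding topologically_transitive_def
proof (intro bexI[of _ "suspension h universal_path 0"] equalityI subsetI)
  let ?x = "suspension h universal_path 0"
  show "?x \<in> Delta E h" by (rule suspension_in_Delta[OF h universal_path_in_Omega])
  show "y \<in> Delta E h" if "y \<in> omega_limit (Delta E h) (dist_Delta h) psi ?x" for y
    using that unfolding omega_limit_def by blast
  fix y assume y: "y \<in> Delta E h"
  obtain \<tau> s where \<tau>: "\<tau> \<in> Omega E" and y_eq: "y = suspension h \<tau> s"
    by (rule Delta_imp_suspension[OF h y])
  define c where "c = s - real_of_int \<lfloor>s / h\<rfloor> * h"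
  have "\<exists>t. c + h * real k \<le> t \<and> dist_Delta h (psi t ?x) y \<le> half_power_sum * (1/2) ^ k" for k
    using universal_path_approaches[OF h \<tau>, of s k] unfolding y_eq c_def by blast
  then obtain t where t_ge: "\<And>k. c + h * real k \<le> t k"
    and t_dist: "\<And>k. dist_Delta h (psi (t k) ?x) y \<le> half_power_sum * (1/2) ^ k"
    by metis
  have "filterlim (\<lambda>k. c + h * real k) at_top sequentially"
    by (intro filterlim_tendsto_add_at_top[OF tendsto_const]
        filterlim_tendsto_pos_mult_at_top[OF tendsto_const h filterlim_real_sequentially])
  then have "filterlim t at_top sequentially"
    by (rule filterlim_at_top_mono) (use t_ge in auto)
  moreover have "(\<lambda>k. dist_Delta h (psi (t k) ?x) y) \<longlonglongrightarrow> 0"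
  proof (rule tendsto_sandwich[of "\<lambda>_. 0" _ _ "\<lambda>k. half_power_sum * (1/2) ^ k"])
    show "(\<lambda>k. half_power_sum * (1/2::real) ^ k) \<longlonglongrightarrow> 0"
      by (intro tendsto_mult_right_zero LIMSEQ_power_zero) simp
  qed (use dist_Delta_nonneg[OF h] t_dist in \<open>auto intro!: always_eventually\<close>)
  ultimately show "y \<in> omega_limit (Delta E h) (dist_Delta h) psi ?x"
    unfolding omega_limit_def using y by blast
qed

end

theorem mainTheorem12:
  fixes E :: "'v::finite \<Rightarrow> 'v \<Rightarrow> bool" and h :: real
  assumes "h > 0"
    and "strongly_connected E"
    and "\<exists>v. out_degree E v > 1"
  shows "chaotic_flow (Delta E h) (dist_Delta h) psi"
proof -
  interpret strongly_connected_graph E by unfold_locales fact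
  obtain v w\<^sub>1 w\<^sub>2 where "E v w\<^sub>1" "E v w\<^sub>2" "w\<^sub>1 \<noteq> w\<^sub>2"
    using assms(3) out_degree_gt_1_imp_two_successors by metis
  then show ?thesis
    unfolding chaotic_flow_def
    using sensitive_dependence_Delta periodic_dense_Delta topologically_transitive_Delta assms(1)
    by blast
qed

end
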